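(* Let $M$ be a semigroup and let $f:M^I\to\mathbb N$ be a map such that $f(I)=0$ and $f(m'mm'')\ge f(m)$ for all $m,m',m''\in M^I$. Define $D:\mathrm{Rh}(M^I)\times\mathrm{Rh}(M^I)\to\overline{\mathbb N}$ by $D(\sigma,\tau)=f(\sigma\wedge_{\mathcal L}\tau)$ if $\sigma\ne\tau$ and $D(\sigma,\sigma)=1+\sup f$ (interpreted as $\omega$ if $f$ is unbounded). Then (i) $D$ is a strict length function for $\mathrm{Rh}(M^I)$; (ii) $D=D_\chi$ for some strongly faithful elliptic $\mathrm{Rh}(M^I)$-tree $\chi$, unique up to isomorphism.
   Context: $M^I$ denotes $M$ with a new identity $I$ adjoined (even if $M$ is already a monoid). For a monoid $N$: $a\le_{\mathcal L}b$ iff $a\in Nb$; $a\,\mathcal L\,b$ iff $a\le_{\mathcal L}b$ and $b\le_{\mathcal L}a$; $a<_{\mathcal L}b$ iff $a\le_{\mathcal L}b$ and not $a\,\mathcal L\, b$. The Rhodes expansion $\mathrm{Rh}(N)$ is the set of finite chains $(n_k<_{\mathcal L}\cdots<_{\mathcal L}n_1<_{\mathcal L}n_0=1)$, $k\ge0$, with product $\sigma\tau=\mathrm{lm}(n_kn'_l\le_{\mathcal L}\cdots\le_{\mathcal L}n_1n'_l\le_{\mathcal L}n'_l<_{\mathcal L}\cdots<_{\mathcal L}n'_0=1)$ for $\sigma=(n_k<\cdots<n_0)$, $\tau=(n'_l<\cdots<n'_0)$, where $\mathrm{lm}$ keeps, in each block of $\mathcal L$-equivalent terms, only the leftmost one;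 it is a monoid with identity $(1)$. For $\sigma=(m_k<_{\mathcal L}\cdots<_{\mathcal L}m_0=I)$, $\tau=(m'_l<_{\mathcal L}\cdots<_{\mathcal L}m'_0=I)$ in $\mathrm{Rh}(M^I)$, $\sigma\wedge_{\mathcal L}\tau=m_r$ where $r$ is the largest $i\le\min\{k,l\}$ with $m_j=m'_j$ for $j<i$ and $m_i\,\mathcal L\,m'_i$. Length functions: $D:S\times S\to\mathbb N\cup\{\omega\}$ with (L1) $D(m,m')=D(m',m)$, (L2) $D(m',m'')\le D(m,m)$, (L3) $D(m',m'')\le D(m'm,m''m)$, (L4) $D(m,m'')\ge\min\{D(m,m'),D(m',m'')\}$; strict: (L5) $D(m',m'')=D(m,m)\Rightarrow m'=m''$. Elliptic $S$-tree $\chi=(r_0,T,\alpha,\theta)$: uniform rooted tree (all maximal rays have the same length), maximal ray $\alpha$, monoid homomorphism $\theta$ from $S$ to the depth-preserving distance-non-increasing self-maps of the vertex set, with $\mathrm{Vert}(T)=\bigcup_i\alpha_iS$; strongly faithful if $\alpha s=\alpha s'\Rightarrow s=s'$; $D_\chi(s,s')=|\alpha s\wedge\alpha s'|$ (length of the longest common initial segment of the rays). Isomorphism: bijective elliptic contraction preserving the distinguished ray and commuting with the actions. *)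

theory Defs
  imports Main "HOL-Library.Extended_Nat"
begin

section \<open>The monoid M^I (M a semigroup, I = None a new identity)\<close>

fun omult :: "'a::semigroup_mult option \<Rightarrow> 'a option \<Rightarrow> 'a option" where
  "omult None y = y"
| "omult (Some a) None = Some a"
| "omult (Some a) (Some b) = Some (a * b)"

definition le_L :: "'a::semigroup_mult option \<Rightarrow> 'a option \<Rightarrow> bool" where
  "le_L a b \<longleftrightarrow> (\<exists>c. a = omult c b)"

definition eq_L :: "'a::semigroup_mult option \<Rightarrow> 'a option \<Rightarrow> bool" where
  "eq_L a b \<longleftrightarrow> le_L a b \<and> le_L b a"

definition less_L :: "'a::semigroup_mult option \<Rightarrow> 'a option \<Rightarrow> bool" where
  "less_L a b \<longleftrightarrow> le_L a b \<and> \<not> eq_L a b"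

text \<open>A chain (n_k <_L ... <_L n_1 <_L n_0 = I) is represented by the list
  [n_0, n_1, ..., n_k], i.e. index i of the list holds n_i.\<close>

definition rh_set :: "'a::semigroup_mult option list set" where
  "rh_set = {xs. xs \<noteq> [] \<and> xs ! 0 = None \<and>
                 (\<forall>i. Suc i < length xs \<longrightarrow> less_L (xs ! Suc i) (xs ! i))}"

text \<open>lm: in each block of consecutive L-equivalent terms keep only the leftmost one
  in the written order n_k ... n_0, i.e. the one of largest index in our list.\<close>

fun lm :: "'a::semigroup_mult option list \<Rightarrow> 'a option list" where
  "lm [] = []"
| "lm [x] = [x]"
| "lm (x # y # ys) = (if eq_L x y then lm (y # ys) else x # lm (y # ys))"

text \<open>Product: sigma tau = lm(n_k n'_l <= ... <= n_1 n'_l <= n'_l < ... < n'_0).\<close>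

definition rh_mult :: "'a::semigroup_mult option list \<Rightarrow> 'a option list \<Rightarrow> 'a option list" where
  "rh_mult \<sigma> \<tau> = lm (\<tau> @ map (\<lambda>n. omult n (last \<tau>)) (tl \<sigma>))"

definition rh_one :: "'a::semigroup_mult option list" where
  "rh_one = [None]"

definition rh_meet :: "'a::semigroup_mult option list \<Rightarrow> 'a option list \<Rightarrow> 'a option" where
  "rh_meet \<sigma> \<tau> = \<sigma> ! (GREATEST i. i < length \<sigma> \<and> i < length \<tau> \<and>
                        (\<forall>j<i. \<sigma> ! j = \<tau> ! j) \<and> eq_L (\<sigma> ! i) (\<tau> ! i))"

definition length_function ::
  "'s set \<Rightarrow> ('s \<Rightarrow> 's \<Rightarrow> 's) \<Rightarrow> ('s \<Rightarrow> 's \<Rightarrow> enat) \<Rightarrow> bool" where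
  "length_function S mult D \<longleftrightarrow>
     (\<forall>m\<in>S. \<forall>m'\<in>S. D m m' = D m' m) \<and>
     (\<forall>m\<in>S. \<forall>m'\<in>S. \<forall>m''\<in>S. D m' m'' \<le> D m m) \<and>
     (\<forall>m\<in>S. \<forall>m'\<in>S. \<forall>m''\<in>S. D m' m'' \<le> D (mult m' m) (mult m'' m)) \<and>
     (\<forall>m\<in>S. \<forall>m'\<in>S. \<forall>m''\<in>S. D m m'' \<ge> min (D m m') (D m' m''))"

definition strict_length_function ::
  "'s set \<Rightarrow> ('s \<Rightarrow> 's \<Rightarrow> 's) \<Rightarrow> ('s \<Rightarrow> 's \<Rightarrow> enat) \<Rightarrow> bool" where
  "strict_length_function S mult D \<longleftrightarrow> length_function S mult D \<and>
     (\<forall>m\<in>S. \<forall>m'\<in>S. \<forall>m''\<in>S. D m' m'' = D m m \<longrightarrow> m' = m'')"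

text \<open>A rooted tree is given by a vertex set, a root and a parent function; the edges
  are {v, par v} for v \<noteq> root.\<close>

definition rooted_tree :: "'v set \<Rightarrow> 'v \<Rightarrow> ('v \<Rightarrow> 'v) \<Rightarrow> bool" where
  "rooted_tree V r par \<longleftrightarrow> r \<in> V \<and> (\<forall>v\<in>V. v \<noteq> r \<longrightarrow> par v \<in> V) \<and>
     (\<forall>v\<in>V. \<exists>k. (par ^^ k) v = r)"

definition depth :: "'v \<Rightarrow> ('v \<Rightarrow> 'v) \<Rightarrow> 'v \<Rightarrow> nat" where
  "depth r par v = (LEAST k. (par ^^ k) v = r)"

definition anc :: "'v \<Rightarrow> ('v \<Rightarrow> 'v) \<Rightarrow> 'v \<Rightarrow> 'v set" where
  "anc r par v = {(par ^^ i) v | i. i \<le> depth r par v}"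

text \<open>Graph distance in the tree: length of the unique path between u and v.\<close>
definition tree_dist :: "'v \<Rightarrow> ('v \<Rightarrow> 'v) \<Rightarrow> 'v \<Rightarrow> 'v \<Rightarrow> nat" where
  "tree_dist r par u v = card (anc r par u - anc r par v) + card (anc r par v - anc r par u)"

text \<open>A ray from the root of length l (number of edges, possibly infinite):
  vertices alpha 0 = root, alpha 1, ..., alpha i for i \<le> l.\<close>
definition is_ray :: "'v set \<Rightarrow> 'v \<Rightarrow> ('v \<Rightarrow> 'v) \<Rightarrow> enat \<Rightarrow> (nat \<Rightarrow> 'v) \<Rightarrow> bool" where
  "is_ray V r par l \<alpha> \<longleftrightarrow> \<alpha> 0 = r \<and> (\<forall>i. enat i \<le> l \<longrightarrow> \<alpha> i \<in> V) \<and>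
     (\<forall>i. enat (Suc i) \<le> l \<longrightarrow> \<alpha> (Suc i) \<noteq> r \<and> par (\<alpha> (Suc i)) = \<alpha> i)"

definition is_max_ray :: "'v set \<Rightarrow> 'v \<Rightarrow> ('v \<Rightarrow> 'v) \<Rightarrow> enat \<Rightarrow> (nat \<Rightarrow> 'v) \<Rightarrow> bool" where
  "is_max_ray V r par l \<alpha> \<longleftrightarrow> is_ray V r par l \<alpha> \<and>
     (\<forall>n. l = enat n \<longrightarrow> \<not> (\<exists>w\<in>V. w \<noteq> r \<and> par w = \<alpha> n))"

definition uniform_tree :: "'v set \<Rightarrow> 'v \<Rightarrow> ('v \<Rightarrow> 'v) \<Rightarrow> bool" where
  "uniform_tree V r par \<longleftrightarrow> rooted_tree V r par \<and>
     (\<forall>l \<alpha> l' \<alpha>'. is_max_ray V r par l \<alpha> \<and> is_max_ray V r par l' \<alpha>' \<longrightarrow> l = l')"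

text \<open>chi = (r_0, T, alpha, theta). The action of S is written on the right:
  act v s = v s, with v (s t) = (v s) t and v 1 = v.  hgt is the length of alpha.\<close>
record ('v, 's) etree =
  troot :: 'v
  tverts :: "'v set"
  tpar :: "'v \<Rightarrow> 'v"
  hgt :: enat
  tray :: "nat \<Rightarrow> 'v"
  tact :: "'v \<Rightarrow> 's \<Rightarrow> 'v"

definition elliptic_tree ::
  "'s set \<Rightarrow> ('s \<Rightarrow> 's \<Rightarrow> 's) \<Rightarrow> 's \<Rightarrow> ('v, 's) etree \<Rightarrow> bool" where
  "elliptic_tree S mult one \<chi> \<longleftrightarrow>
     (let V = tverts \<chi>; r = troot \<chi>; par = tpar \<chi>; act = tact \<chi> in
      uniform_tree V r par \<and>
      is_max_ray V r par (hgt \<chi>) (tray \<chi>) \<and>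
      (\<forall>v\<in>V. \<forall>s\<in>S. act v s \<in> V) \<and>
      (\<forall>v\<in>V. \<forall>s\<in>S. depth r par (act v s) = depth r par v) \<and>
      (\<forall>u\<in>V. \<forall>v\<in>V. \<forall>s\<in>S. tree_dist r par (act u s) (act v s) \<le> tree_dist r par u v) \<and>
      (\<forall>v\<in>V. \<forall>s\<in>S. \<forall>t\<in>S. act v (mult s t) = act (act v s) t) \<and>
      (\<forall>v\<in>V. act v one = v) \<and>
      V = {act (tray \<chi> i) s | i s. enat i \<le> hgt \<chi> \<and> s \<in> S})"

definition strongly_faithful :: "'s set \<Rightarrow> ('v, 's) etree \<Rightarrow> bool" where
  "strongly_faithful S \<chi> \<longleftrightarrow>
     (\<forall>s\<in>S. \<forall>s'\<in>S. (\<forall>i. enat i \<le> hgt \<chi> \<longrightarrow> tact \<chi> (tray \<chi> i) s = tact \<chi> (tray \<chi> i) s')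
                      \<longrightarrow> s = s')"

text \<open>D_chi(s,s') = length (number of edges) of the longest common initial segment of the
  rays alpha s and alpha s'.\<close>
definition D_chi :: "('v, 's) etree \<Rightarrow> 's \<Rightarrow> 's \<Rightarrow> enat" where
  "D_chi \<chi> s s' = Sup {enat i | i. enat i \<le> hgt \<chi> \<and>
       (\<forall>j\<le>i. tact \<chi> (tray \<chi> j) s = tact \<chi> (tray \<chi> j) s')}"

definition etree_iso :: "'s set \<Rightarrow> ('v, 's) etree \<Rightarrow> ('w, 's) etree \<Rightarrow> bool" where
  "etree_iso S \<chi> \<chi>' \<longleftrightarrow> (\<exists>\<phi>.
     bij_betw \<phi> (tverts \<chi>) (tverts \<chi>') \<and>
     \<phi> (troot \<chi>) = troot \<chi>' \<and>
     (\<forall>v\<in>tverts \<chi>. depth (troot \<chi>') (tpar \<chi>') (\<phi> v) = depth (troot \<chi>) (tpar \<chi>) v) \<and>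
     (\<forall>u\<in>tverts \<chi>. \<forall>v\<in>tverts \<chi>.
        tree_dist (troot \<chi>') (tpar \<chi>') (\<phi> u) (\<phi> v) \<le> tree_dist (troot \<chi>) (tpar \<chi>) u v) \<and>
     hgt \<chi> = hgt \<chi>' \<and>
     (\<forall>i. enat i \<le> hgt \<chi> \<longrightarrow> \<phi> (tray \<chi> i) = tray \<chi>' i) \<and>
     (\<forall>v\<in>tverts \<chi>. \<forall>s\<in>S. \<phi> (tact \<chi> v s) = tact \<chi>' (\<phi> v) s))"

definition D_rh :: "('a::semigroup_mult option \<Rightarrow> nat) \<Rightarrow> 'a option list \<Rightarrow> 'a option list \<Rightarrow> enat" where
  "D_rh f \<sigma> \<tau> = (if \<sigma> = \<tau> then eSuc (SUP m. enat (f m)) else enat (f (rh_meet \<sigma> \<tau>)))"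

end

theory Submission
  imports Defs
begin

text \<open>
  First we show that Rh(M^I) is a monoid (closure and associativity of the product via
  the algebra of the reduction lm) and that D satisfies (L1)-(L5); the key step is that
  the meet of two right translates lies L-below a right translate of the original meet.
  The second half works for an arbitrary monoid S: an elliptic S-tree is determined up
  to isomorphism by its length function D_chi (vertices alpha_i s are matched, and when
  two of them coincide is decided by D_chi), and every strict length function D is
  D_chi for the tree whose vertices at depth i are the balls of radius i for D.
\<close>

lemma omult_assoc: "omult (omult a b) c = omult a (omult b c)"
  by (cases a; cases b; cases c) (auto simp: mult.assoc)

lemma omult_None_right [simp]: "omult a None = a"
  by (cases a) auto

lemma omult_eq_None:
  "omult a b = None \<longleftrightarrow> a = None \<and> b = None"
  "None = omult a b \<longleftrightarrow> a = None \<and> b = None"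
  by (cases a; cases b; auto)+

lemma le_L_refl [simp]: "le_L a a"
  unfolding le_L_def by (metis omult.simps(1))

lemma le_L_trans: "le_L a b \<Longrightarrow> le_L b c \<Longrightarrow> le_L a c"
  unfolding le_L_def by (metis omult_assoc)

lemma le_L_right: "le_L a b \<Longrightarrow> le_L (omult a c) (omult b c)"
  unfolding le_L_def by (metis omult_assoc)

lemma le_L_None: "le_L None x \<longleftrightarrow> x = None"
  unfolding le_L_def by (metis omult_eq_None(1) omult.simps(1))

lemma eq_L_refl [simp]: "eq_L a a"
  unfolding eq_L_def by simp

lemma eq_L_sym: "eq_L a b \<Longrightarrow> eq_L b a"
  unfolding eq_L_def by simp

lemma eq_L_trans: "eq_L a b \<Longrightarrow> eq_L b c \<Longrightarrow> eq_L a c"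
  unfolding eq_L_def by (metis le_L_trans)

lemma eq_L_right: "eq_L a b \<Longrightarrow> eq_L (omult a c) (omult b c)"
  unfolding eq_L_def by (simp add: le_L_right)

text \<open>The identity is L-above everything and L-below nothing else, so it never occurs
  strictly below another element of a chain.\<close>
lemma less_L_not_None: "less_L y x \<Longrightarrow> y \<noteq> None"
  unfolding less_L_def eq_L_def using le_L_None by (metis le_L_refl)

section \<open>The reduction lm\<close>

abbreviation weak_chain :: "'a::semigroup_mult option list \<Rightarrow> bool" where
  "weak_chain xs \<equiv> successively (\<lambda>x y. le_L y x) xs"

abbreviation strict_chain :: "'a::semigroup_mult option list \<Rightarrow> bool" where
  "strict_chain xs \<equiv> successively (\<lambda>x y. less_L y x) xs"

lemma lm_Cons: "lm (x # ys) = (if ys = [] then [x] else if eq_L x (hd ys) then lm ys else x # lm ys)"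
  by (cases ys) auto

lemma lm_Nil_iff [simp]: "lm xs = [] \<longleftrightarrow> xs = []"
  by (induction xs rule: lm.induct) auto

lemma set_lm: "set (lm xs) \<subseteq> set xs"
  by (induction xs rule: lm.induct) auto

lemma hd_lm: "ys \<noteq> [] \<Longrightarrow> eq_L (hd (lm ys)) (hd ys)"
  by (induction ys rule: lm.induct) (auto intro: eq_L_trans eq_L_sym)

lemma last_lm: "xs \<noteq> [] \<Longrightarrow> last (lm xs) = last xs"
  by (induction xs rule: lm.induct) auto

lemma lm_strict_chain: "strict_chain xs \<Longrightarrow> lm xs = xs"
  by (induction xs rule: lm.induct) (auto simp: less_L_def eq_L_def)

lemma strict_chain_lm: "weak_chain xs \<Longrightarrow> strict_chain (lm xs)"
proof (induction xs rule: lm.induct)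
  case (3 x y ys)
  show ?case
  proof (cases "eq_L x y")
    case False
    have "eq_L (hd (lm (y # ys))) y" using hd_lm[of "y # ys"] by simp
    moreover have "le_L y x" using "3.prems" by simp
    ultimately have "less_L (hd (lm (y # ys))) x"
      using False unfolding less_L_def eq_L_def by (meson le_L_trans)
    thus ?thesis using False 3 by (simp add: successively_Cons)
  qed (use 3 in simp)
qed auto

lemma lm_idem [simp]: "lm (lm xs) = lm xs"
proof (induction xs rule: lm.induct)
  case (3 x y ys)
  show ?case
  proof (cases "eq_L x y")
    case False
    have "eq_L (hd (lm (y # ys))) y" using hd_lm[of "y # ys"] by simp
    hence "\<not> eq_L x (hd (lm (y # ys)))" using False eq_L_trans eq_L_sym by blast
    thus ?thesis using False 3 by (simp add: lm_Cons[of x "lm (y # ys)"])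
  qed (use 3 in simp)
qed auto

lemma lm_Cons_lm: "lm (x # lm ys) = lm (x # ys)"
proof (cases "ys = []")
  case False
  have "eq_L (hd (lm ys)) (hd ys)" using hd_lm False by blast
  hence "eq_L x (hd (lm ys)) \<longleftrightarrow> eq_L x (hd ys)" using eq_L_trans eq_L_sym by blast
  thus ?thesis using False by (simp add: lm_Cons)
qed simp

lemma lm_append_lm_right: "lm (xs @ lm ys) = lm (xs @ ys)"
proof (induction xs)
  case (Cons x xs)
  have "lm (x # (xs @ lm ys)) = lm (x # lm (xs @ lm ys))" by (simp add: lm_Cons_lm)
  also have "\<dots> = lm (x # (xs @ ys))" using Cons by (simp add: lm_Cons_lm)
  finally show ?case by simp
qed simp

lemma lm_append_lm_left: "lm (lm xs @ ys) = lm (xs @ ys)"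
proof (induction xs)
  case (Cons x xs)
  show ?case
  proof (cases "xs = []")
    case ne: False
    show ?thesis
    proof (cases "eq_L x (hd xs)")
      case False
      have "eq_L (hd (lm xs)) (hd xs)" using hd_lm ne by blast
      hence "\<not> eq_L x (hd (lm xs @ ys))" using False eq_L_trans eq_L_sym ne by simp blast
      thus ?thesis using False ne Cons by (simp add: lm_Cons)
    qed (use ne Cons in \<open>simp add: lm_Cons\<close>)
  qed simp
qed simp

text \<open>Right multiplication preserves L-equivalence, hence commutes with lm up to lm.\<close>
lemma lm_map_lm: "lm (map (\<lambda>n. omult n c) (lm xs)) = lm (map (\<lambda>n. omult n c) xs)"
proof (induction xs)
  case (Cons x xs)
  let ?g = "\<lambda>n. omult n c"
  show ?case
  proof (cases "xs = []")
    case ne: False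
    show ?thesis
    proof (cases "eq_L x (hd xs)")
      case True
      hence "eq_L (?g x) (hd (map ?g xs))" using ne by (simp add: eq_L_right hd_map)
      thus ?thesis using True ne Cons by (simp add: lm_Cons)
    next
      case False
      have "lm (map ?g (lm (x # xs))) = lm (?g x # map ?g (lm xs))"
        using False ne by (simp add: lm_Cons)
      also have "\<dots> = lm (?g x # lm (map ?g (lm xs)))" by (simp only: lm_Cons_lm)
      also have "\<dots> = lm (map ?g (x # xs))" using Cons by (simp add: lm_Cons_lm)
      finally show ?thesis .
    qed
  qed simp
qed simp

text \<open>lmp W z is the part of lm (W @ z # Z) contributed by W; it depends on z only
  through its L-class.\<close>
fun lmp :: "'a::semigroup_mult option list \<Rightarrow> 'a option \<Rightarrow> 'a option list" where
  "lmp [] z = []"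
| "lmp (w # W) z = (if eq_L w (hd (W @ [z])) then lmp W z else w # lmp W z)"

lemma lm_split: "lm (W @ z # Z) = lmp W z @ lm (z # Z)"
proof (induction W)
  case (Cons w W)
  have "hd (W @ z # Z) = hd (W @ [z])" by (cases W) auto
  thus ?case using Cons by (simp add: lm_Cons[of w])
qed simp

lemma lmp_cong: "eq_L z z' \<Longrightarrow> lmp W z = lmp W z'"
proof (induction W)
  case (Cons w W)
  have "eq_L w (hd (W @ [z])) \<longleftrightarrow> eq_L w (hd (W @ [z']))"
    using Cons.prems by (cases W) (auto intro: eq_L_trans eq_L_sym)
  thus ?case using Cons by simp
qed simp

section \<open>The Rhodes expansion is a monoid\<close>

lemma rh_set_iff: "xs \<in> rh_set \<longleftrightarrow> (\<exists>s. xs = None # s \<and> strict_chain (None # s))"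
  unfolding rh_set_def successively_conv_nth by (cases xs) auto

lemma strict_chain_None_notin: "strict_chain (x # s) \<Longrightarrow> None \<notin> set s"
  by (induction s arbitrary: x) (auto simp: successively_Cons dest: less_L_not_None)

lemma rh_set_decomp: "xs \<in> rh_set \<Longrightarrow> \<exists>s. xs = None # s \<and> None \<notin> set s"
  using rh_set_iff strict_chain_None_notin by metis

lemma rh_chain_le: "\<sigma> \<in> rh_set \<Longrightarrow> i \<le> j \<Longrightarrow> j < length \<sigma> \<Longrightarrow> le_L (\<sigma> ! j) (\<sigma> ! i)"
proof (induction j)
  case (Suc j)
  show ?case
  proof (cases "i = Suc j")
    case False
    hence "le_L (\<sigma> ! j) (\<sigma> ! i)" using Suc by simp
    moreover have "less_L (\<sigma> ! Suc j) (\<sigma> ! j)" using Suc.prems unfolding rh_set_def by auto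
    ultimately show ?thesis unfolding less_L_def using le_L_trans by blast
  qed simp
qed simp

lemma lm_None_Cons: "None \<notin> set xs \<Longrightarrow> lm (None # xs) = None # lm xs"
  by (cases xs) (auto simp: eq_L_def le_L_None)

text \<open>On chains the leading identity can be split off the product, which reduces
  it to an operation on the identity-free tails.\<close>
lemma rh_mult_tails:
  assumes "None \<notin> set s" "None \<notin> set t"
  shows "rh_mult (None # s) (None # t) = None # lm (t @ map (\<lambda>n. omult n (last (None # t))) s)"
proof -
  have "None \<notin> set (t @ map (\<lambda>n. omult n (last (None # t))) s)"
    using assms by (auto simp: omult_eq_None)
  moreover have "rh_mult (None # s) (None # t) = lm (None # (t @ map (\<lambda>n. omult n (last (None # t))) s))"
    by (simp only: rh_mult_def list.sel append_Cons)
  ultimately show ?thesis using lm_None_Cons by metis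
qed

lemma rh_one_in [simp]: "rh_one \<in> rh_set"
  unfolding rh_one_def rh_set_def by simp

lemma rh_mult_closed:
  assumes "\<sigma> \<in> rh_set" "\<tau> \<in> rh_set"
  shows "rh_mult \<sigma> \<tau> \<in> rh_set"
proof -
  obtain s where s: "\<sigma> = None # s" "strict_chain (None # s)" using assms rh_set_iff by blast
  obtain t where t: "\<tau> = None # t" "strict_chain (None # t)" using assms rh_set_iff by blast
  define g where "g = (\<lambda>n. omult n (last (None # t)))"
  have ns: "None \<notin> set s" "None \<notin> set t" using s t strict_chain_None_notin by blast+
  have w1: "weak_chain (None # t)"
    using t(2) by (rule successively_mono) (auto simp: less_L_def)
  have w2: "weak_chain (map g s)"
  proof -
    have "strict_chain s" using s(2) by (cases s) simp_all
    thus ?thesis unfolding successively_map g_def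
      by (rule successively_mono) (auto simp: less_L_def le_L_right)
  qed
  have w3: "s = [] \<or> le_L (hd (map g s)) (last (None # t))"
    by (cases s) (auto simp: g_def le_L_def)
  have "weak_chain (None # (t @ map g s))"
    using w1 w2 w3 successively_append_iff[of _ "None # t"] by auto
  hence "strict_chain (lm (None # (t @ map g s)))" by (rule strict_chain_lm)
  moreover have "None \<notin> set (t @ map g s)" using ns by (auto simp: g_def omult_eq_None)
  ultimately have "strict_chain (None # lm (t @ map g s))" using lm_None_Cons by metis
  thus ?thesis using rh_mult_tails[OF ns] s(1) t(1) unfolding rh_set_iff g_def by auto
qed

lemma rh_assoc:
  assumes "\<sigma> \<in> rh_set" "\<tau> \<in> rh_set" "\<rho> \<in> rh_set"
  shows "rh_mult (rh_mult \<sigma> \<tau>) \<rho> = rh_mult \<sigma> (rh_mult \<tau> \<rho>)"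
proof -
  obtain s t p where stp: "\<sigma> = None # s" "\<tau> = None # t" "\<rho> = None # p"
    and nn: "None \<notin> set s" "None \<notin> set t" "None \<notin> set p"
    using rh_set_decomp assms by metis
  define g where "g = (\<lambda>c n. omult (n::'a option) c)"
  define ct where "ct = last (None # t)"
  define cp where "cp = last (None # p)"
  have no_None: "None \<notin> set (lm (xs @ map (g c) ys))"
    if "None \<notin> set xs" "None \<notin> set ys" for xs ys c
    using that set_lm by (fastforce simp: g_def omult_eq_None)
  have "rh_mult (rh_mult \<sigma> \<tau>) \<rho> = None # lm (p @ map (g cp) (lm (t @ map (g ct) s)))"
    using rh_mult_tails[OF nn(1,2)] rh_mult_tails[OF no_None[OF nn(2,1)] nn(3)]
    unfolding stp g_def ct_def cp_def by simp
  also have "lm (p @ map (g cp) (lm (t @ map (g ct) s))) = lm (p @ lm (map (g cp) (lm (t @ map (g ct) s))))"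
    by (simp add: lm_append_lm_right)
  also have "\<dots> = lm (p @ lm (map (g cp) (t @ map (g ct) s)))"
    unfolding g_def by (simp add: lm_map_lm)
  also have "\<dots> = lm (lm (p @ map (g cp) t) @ map (g (omult ct cp)) s)"
    by (simp add: lm_append_lm_right lm_append_lm_left g_def omult_assoc comp_def)
  also have "last (None # lm (p @ map (g cp) t)) = omult ct cp"
    by (cases "t = []"; cases "p = []") (auto simp: ct_def cp_def g_def last_lm last_map)
  hence "None # lm (lm (p @ map (g cp) t) @ map (g (omult ct cp)) s) = rh_mult \<sigma> (rh_mult \<tau> \<rho>)"
    using rh_mult_tails[OF nn(2,3)] rh_mult_tails[OF nn(1) no_None[OF nn(3,2)]]
    unfolding stp g_def cp_def by simp
  finally show ?thesis .
qed

lemma rh_left_one: "\<sigma> \<in> rh_set \<Longrightarrow> rh_mult rh_one \<sigma> = \<sigma>"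
  unfolding rh_mult_def rh_one_def rh_set_iff using lm_strict_chain by auto

lemma rh_right_one: "\<sigma> \<in> rh_set \<Longrightarrow> rh_mult \<sigma> rh_one = \<sigma>"
  unfolding rh_mult_def rh_one_def rh_set_iff using lm_strict_chain by auto

section \<open>The meet of two chains\<close>

definition meet_candidate :: "'a::semigroup_mult option list \<Rightarrow> 'a option list \<Rightarrow> nat \<Rightarrow> bool" where
  "meet_candidate \<sigma> \<tau> i \<longleftrightarrow>
     i < length \<sigma> \<and> i < length \<tau> \<and> (\<forall>j<i. \<sigma> ! j = \<tau> ! j) \<and> eq_L (\<sigma> ! i) (\<tau> ! i)"

definition meet_index :: "'a::semigroup_mult option list \<Rightarrow> 'a option list \<Rightarrow> nat" where
  "meet_index \<sigma> \<tau> = (GREATEST i. meet_candidate \<sigma> \<tau> i)"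

lemma rh_meet_eq: "rh_meet \<sigma> \<tau> = \<sigma> ! meet_index \<sigma> \<tau>"
  unfolding rh_meet_def meet_index_def meet_candidate_def ..

lemma meet_index_greatest:
  assumes "meet_candidate \<sigma> \<tau> i"
  shows "meet_candidate \<sigma> \<tau> (meet_index \<sigma> \<tau>)" "i \<le> meet_index \<sigma> \<tau>"
proof -
  have bound: "\<And>y. meet_candidate \<sigma> \<tau> y \<Longrightarrow> y \<le> length \<sigma>"
    unfolding meet_candidate_def by simp
  show "meet_candidate \<sigma> \<tau> (meet_index \<sigma> \<tau>)" "i \<le> meet_index \<sigma> \<tau>"
    unfolding meet_index_def using GreatestI_nat Greatest_le_nat assms bound by metis+
qed

text \<open>All chains start with the identity, so 0 is always a candidate.\<close>
lemma meet_candidate_0: "\<sigma> \<in> rh_set \<Longrightarrow> \<tau> \<in> rh_set \<Longrightarrow> meet_candidate \<sigma> \<tau> 0"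
  unfolding meet_candidate_def rh_set_def by auto

lemma meet_index_prop: "\<sigma> \<in> rh_set \<Longrightarrow> \<tau> \<in> rh_set \<Longrightarrow> meet_candidate \<sigma> \<tau> (meet_index \<sigma> \<tau>)"
  using meet_index_greatest(1) meet_candidate_0 by blast

lemma meet_candidate_sym: "meet_candidate \<sigma> \<tau> i \<longleftrightarrow> meet_candidate \<tau> \<sigma> i"
  unfolding meet_candidate_def using eq_L_sym by metis

lemma meet_index_sym: "meet_index \<sigma> \<tau> = meet_index \<tau> \<sigma>"
proof -
  have "meet_candidate \<sigma> \<tau> = meet_candidate \<tau> \<sigma>" by (rule ext) (rule meet_candidate_sym)
  thus ?thesis unfolding meet_index_def by simp
qed

lemma meet_candidate_trans:
  assumes "meet_candidate \<sigma> \<tau> r1" "meet_candidate \<tau> \<rho> r2"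
  shows "meet_candidate \<sigma> \<rho> (min r1 r2)"
  using assms eq_L_trans unfolding meet_candidate_def
  by (cases r1 r2 rule: linorder_cases) (auto simp: min_def)

lemma meet_candidate_decomp:
  assumes "meet_candidate \<sigma> \<tau> r"
  shows "\<sigma> = take r \<sigma> @ \<sigma> ! r # drop (Suc r) \<sigma>" "\<tau> = take r \<sigma> @ \<tau> ! r # drop (Suc r) \<tau>"
proof -
  have "take r \<sigma> = take r \<tau>" using assms unfolding meet_candidate_def by (intro nth_equalityI) auto
  thus "\<sigma> = take r \<sigma> @ \<sigma> ! r # drop (Suc r) \<sigma>" "\<tau> = take r \<sigma> @ \<tau> ! r # drop (Suc r) \<tau>"
    using assms id_take_nth_drop unfolding meet_candidate_def by metis+
qed

lemma meet_in_suffix: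
  assumes "A = w @ a # A'" "B = w @ b # B'" "eq_L a b"
  shows "rh_meet A B \<in> set (a # A')"
proof -
  have "meet_candidate A B (length w)"
    unfolding meet_candidate_def assms using assms(3) by (auto simp: nth_append)
  hence m: "meet_candidate A B (meet_index A B)" "length w \<le> meet_index A B"
    using meet_index_greatest by blast+
  hence "meet_index A B - length w < length (a # A')"
    "A ! meet_index A B = (a # A') ! (meet_index A B - length w)"
    unfolding meet_candidate_def assms by (auto simp: nth_append)
  thus ?thesis unfolding rh_meet_eq by (metis nth_mem)
qed

lemma rh_mult_split:
  "rh_mult (w # u @ x # S') m =
     lmp (m @ map (\<lambda>n. omult n (last m)) u) (omult x (last m))
     @ lm (map (\<lambda>n. omult n (last m)) (x # S'))"
  unfolding rh_mult_def by (simp add: lm_split[symmetric])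

lemma meet_rh_mult:
  assumes "meet_candidate \<sigma> \<tau> r" "r > 0"
  shows "rh_meet (rh_mult \<sigma> m) (rh_mult \<tau> m) \<in> (\<lambda>n. omult n (last m)) ` set (drop r \<sigma>)"
proof -
  define g where "g = (\<lambda>n. omult n (last m))"
  obtain w u where wu: "take r \<sigma> = w # u"
    using assms unfolding meet_candidate_def by (cases "take r \<sigma>") auto
  define P where "P = lmp (m @ map g u) (g (\<sigma> ! r))"
  have exy: "eq_L (g (\<sigma> ! r)) (g (\<tau> ! r))"
    using assms(1) eq_L_right unfolding meet_candidate_def g_def by blast
  have "rh_mult \<sigma> m = P @ lm (map g (drop r \<sigma>))"
    using rh_mult_split[of w u "\<sigma> ! r" "drop (Suc r) \<sigma>" m] meet_candidate_decomp(1)[OF assms(1)]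
      Cons_nth_drop_Suc[of r \<sigma>] assms(1) unfolding wu P_def g_def meet_candidate_def by simp
  moreover have "rh_mult \<tau> m = P @ lm (map g (drop r \<tau>))"
    using rh_mult_split[of w u "\<tau> ! r" "drop (Suc r) \<tau>" m] meet_candidate_decomp(2)[OF assms(1)]
      Cons_nth_drop_Suc[of r \<tau>] assms(1) lmp_cong[OF exy] unfolding wu P_def g_def meet_candidate_def
    by simp
  moreover obtain a A' where aA: "lm (map g (drop r \<sigma>)) = a # A'"
    using assms(1) unfolding meet_candidate_def by (cases "lm (map g (drop r \<sigma>))") auto
  moreover obtain b B' where bB: "lm (map g (drop r \<tau>)) = b # B'"
    using assms(1) unfolding meet_candidate_def by (cases "lm (map g (drop r \<tau>))") auto
  moreover have "eq_L a b"
  proof -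
    have "eq_L a (g (\<sigma> ! r))" "eq_L b (g (\<tau> ! r))"
      using hd_lm[of "map g (drop r \<sigma>)"] hd_lm[of "map g (drop r \<tau>)"] aA bB assms(1)
      unfolding meet_candidate_def by (auto simp: hd_map hd_drop_conv_nth)
    thus ?thesis using exy eq_L_trans eq_L_sym by blast
  qed
  ultimately have "rh_meet (rh_mult \<sigma> m) (rh_mult \<tau> m) \<in> set (lm (map g (drop r \<sigma>)))"
    using meet_in_suffix by metis
  thus ?thesis using set_lm unfolding g_def by fastforce
qed

section \<open>D is a strict length function\<close>

locale rh_weight =
  fixes f :: "'a::semigroup_mult option \<Rightarrow> nat"
  assumes f_None: "f None = 0"
    and f_ideal: "\<And>m m' m''. f (omult m' (omult m m'')) \<ge> f m"
begin

abbreviation D_top :: enat where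
  "D_top \<equiv> eSuc (SUP m. enat (f m))"

lemma f_antimono: "le_L x y \<Longrightarrow> f y \<le> f x"
  unfolding le_L_def using f_ideal[of y _ None] by auto

lemma f_eq_L: "eq_L x y \<Longrightarrow> f x = f y"
  unfolding eq_L_def using f_antimono le_antisym by blast

lemma f_below_top: "enat (f x) < D_top"
proof -
  have "enat (f x) \<le> (SUP m. enat (f m))" by (rule SUP_upper) simp
  thus ?thesis by (cases "SUP m. enat (f m)") (auto simp: eSuc_enat)
qed

lemma D_diag [simp]: "D_rh f \<sigma> \<sigma> = D_top"
  unfolding D_rh_def by simp

lemma D_off_diag: "\<sigma> \<noteq> \<tau> \<Longrightarrow> D_rh f \<sigma> \<tau> = enat (f (\<sigma> ! meet_index \<sigma> \<tau>))"
  unfolding D_rh_def rh_meet_eq by simp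

lemma D_lt_top: "\<sigma> \<noteq> \<tau> \<Longrightarrow> D_rh f \<sigma> \<tau> < D_top"
  using D_off_diag f_below_top by simp

lemma D_le_top: "D_rh f \<sigma> \<tau> \<le> D_top"
  using D_lt_top by (cases "\<sigma> = \<tau>") (auto intro: less_imp_le)

lemma D_sym:
  assumes "\<sigma> \<in> rh_set" "\<tau> \<in> rh_set"
  shows "D_rh f \<sigma> \<tau> = D_rh f \<tau> \<sigma>"
proof (cases "\<sigma> = \<tau>")
  case False
  have "eq_L (\<sigma> ! meet_index \<sigma> \<tau>) (\<tau> ! meet_index \<tau> \<sigma>)"
    using meet_index_prop[OF assms] meet_index_sym[of \<tau>] unfolding meet_candidate_def by simp
  thus ?thesis using False D_off_diag f_eq_L by metis
qed simp

lemma D_ultrametric: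
  assumes m: "m \<in> rh_set" "m' \<in> rh_set" "m'' \<in> rh_set"
  shows "min (D_rh f m m') (D_rh f m' m'') \<le> D_rh f m m''"
proof (cases "m = m' \<or> m' = m'' \<or> m = m''")
  case True
  thus ?thesis using D_le_top by (auto simp: min_def)
next
  case False
  define r1 where "r1 = meet_index m m'"
  define r2 where "r2 = meet_index m' m''"
  define r where "r = meet_index m m''"
  have c1: "meet_candidate m m' r1" and c2: "meet_candidate m' m'' r2"
    using meet_index_prop m unfolding r1_def r2_def by blast+
  have "min r1 r2 \<le> r" "r < length m"
    using meet_index_greatest[OF meet_candidate_trans[OF c1 c2]] unfolding r_def meet_candidate_def
    by auto
  hence "f (m ! min r1 r2) \<le> f (m ! r)" using rh_chain_le[OF m(1)] f_antimono by blast
  moreover have "min (f (m ! r1)) (f (m' ! r2)) \<le> f (m ! min r1 r2)"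
    using c1 unfolding meet_candidate_def by (cases "r1 \<le> r2") (auto simp: min_def)
  ultimately show ?thesis
    using False D_off_diag unfolding r1_def r2_def r_def by auto
qed

text \<open>The meet of the right translates sigma m, tau m lies L-below a right translate
  of the meet of sigma and tau, so its weight can only be larger.\<close>
lemma D_right_invariant:
  assumes m: "m \<in> rh_set" "m' \<in> rh_set" "m'' \<in> rh_set"
  shows "D_rh f m' m'' \<le> D_rh f (rh_mult m' m) (rh_mult m'' m)"
proof (cases "m' = m'' \<or> rh_mult m' m = rh_mult m'' m")
  case True
  thus ?thesis using D_le_top by auto
next
  case False
  define r where "r = meet_index m' m''"
  have c: "meet_candidate m' m'' r" using meet_index_prop m unfolding r_def by blast
  have "f (m' ! r) \<le> f (rh_meet (rh_mult m' m) (rh_mult m'' m))"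
  proof (cases "r = 0")
    case True
    thus ?thesis using m(2) f_None unfolding rh_set_def by auto
  next
    case False
    then obtain z where z: "z \<in> set (drop r m')"
      and meet: "rh_meet (rh_mult m' m) (rh_mult m'' m) = omult z (last m)"
      using meet_rh_mult[OF c] by blast
    then obtain i where "i < length m' - r" "z = m' ! (r + i)"
      by (auto simp: in_set_conv_nth)
    moreover define k where "k = r + i"
    ultimately have k: "r \<le> k" "k < length m'" "z = m' ! k" by auto
    obtain d where "m' ! k = omult d (m' ! r)"
      using rh_chain_le[OF m(2) k(1,2)] unfolding le_L_def by blast
    thus ?thesis using meet k(3) f_ideal by (simp add: omult_assoc)
  qed
  thus ?thesis using False D_off_diag unfolding D_rh_def r_def by simp
qed

theorem D_rh_strict_length_function: "strict_length_function rh_set rh_mult (D_rh f)"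
  unfolding strict_length_function_def length_function_def
proof (intro conjI ballI impI)
  fix m m' m'' assume "D_rh f m' m'' = D_rh f m m"
  thus "m' = m''" using D_lt_top[of m' m''] by (metis D_diag less_irrefl)
qed (auto simp: D_sym D_le_top D_right_invariant D_ultrametric)

end

section \<open>Rooted trees given by parent functions\<close>

lemma depth_eq:
  assumes "(par ^^ d) w = r" "\<forall>m<d. (par ^^ m) w \<noteq> r"
  shows "depth r par w = d"
  unfolding depth_def
proof (rule Least_equality)
  show "(par ^^ d) w = r" by fact
  fix y assume "(par ^^ y) w = r" thus "d \<le> y" using assms(2) not_less by blast
qed

lemma depth_props:
  assumes "rooted_tree V r par" "v \<in> V"
  shows "(par ^^ depth r par v) v = r" "m < depth r par v \<Longrightarrow> (par ^^ m) v \<noteq> r"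
proof -
  have ex: "\<exists>k. (par ^^ k) v = r" using assms unfolding rooted_tree_def by blast
  show "(par ^^ depth r par v) v = r" unfolding depth_def by (rule LeastI_ex[OF ex])
  show "m < depth r par v \<Longrightarrow> (par ^^ m) v \<noteq> r" unfolding depth_def by (rule not_less_Least)
qed

lemma funpow_comp_apply: "(f ^^ m) ((f ^^ k) v) = (f ^^ (m + k)) v"
  by (simp add: funpow_add)

lemma par_pow_in:
  assumes "rooted_tree V r par" "v \<in> V" "k \<le> depth r par v"
  shows "(par ^^ k) v \<in> V"
  using assms(3)
proof (induction k)
  case 0 thus ?case using assms by simp
next
  case (Suc k)
  have "(par ^^ k) v \<noteq> r" using depth_props(2)[OF assms(1,2)] Suc.prems by simp
  moreover have "(par ^^ k) v \<in> V" using Suc by simp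
  ultimately show ?case using assms(1) unfolding rooted_tree_def by simp
qed

lemma depth_par_pow:
  assumes "rooted_tree V r par" "v \<in> V" "k \<le> depth r par v"
  shows "depth r par ((par ^^ k) v) = depth r par v - k"
proof (rule depth_eq)
  show "(par ^^ (depth r par v - k)) ((par ^^ k) v) = r"
    using depth_props(1)[OF assms(1,2)] assms(3) by (simp add: funpow_comp_apply)
  show "\<forall>m<depth r par v - k. (par ^^ m) ((par ^^ k) v) \<noteq> r"
    using depth_props(2)[OF assms(1,2)] by (simp add: funpow_comp_apply)
qed

lemma anc_eq: "anc r par v = (\<lambda>k. (par ^^ k) v) ` {..depth r par v}"
  unfolding anc_def by auto

lemma finite_anc[simp]: "finite (anc r par v)"
  unfolding anc_eq by simp

lemma card_anc:
  assumes "rooted_tree V r par" "v \<in> V"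
  shows "card (anc r par v) = Suc (depth r par v)"
proof -
  have "inj_on (\<lambda>k. (par ^^ k) v) {..depth r par v}"
  proof (rule inj_onI)
    fix a b assume ab: "a \<in> {..depth r par v}" "b \<in> {..depth r par v}" "(par ^^ a) v = (par ^^ b) v"
    hence "depth r par v - a = depth r par v - b" using depth_par_pow[OF assms, of a] depth_par_pow[OF assms, of b] ab(1,2) by simp
    thus "a = b" using ab by auto
  qed
  thus ?thesis unfolding anc_eq by (simp add: card_image)
qed

lemma anc_self: "v \<in> anc r par v" unfolding anc_def by (auto intro: exI[of _ 0])

lemma anc_par_pow_sub:
  assumes "rooted_tree V r par" "v \<in> V" "k \<le> depth r par v"
  shows "anc r par ((par ^^ k) v) \<subseteq> anc r par v"
proof
  fix x assume "x \<in> anc r par ((par ^^ k) v)"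
  then obtain i where "i \<le> depth r par v - k" "x = (par ^^ (i + k)) v"
    unfolding anc_def depth_par_pow[OF assms] by (auto simp: funpow_comp_apply)
  thus "x \<in> anc r par v" unfolding anc_def using assms(3) by (intro CollectI exI[of _ "i+k"]) auto
qed

lemma tree_dist_par_pow:
  assumes "rooted_tree V r par" "v \<in> V" "k \<le> depth r par v"
  shows "tree_dist r par ((par ^^ k) v) v = k"
proof -
  have s: "anc r par ((par ^^ k) v) \<subseteq> anc r par v" by (rule anc_par_pow_sub[OF assms])
  have "card (anc r par v - anc r par ((par ^^ k) v)) = card (anc r par v) - card (anc r par ((par ^^ k) v))"
    using s by (simp add: card_Diff_subset)
  also have "\<dots> = k" using card_anc[OF assms(1,2)] card_anc[OF assms(1) par_pow_in[OF assms]]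
    depth_par_pow[OF assms] assms(3) by simp
  finally show ?thesis unfolding tree_dist_def using s by simp
qed

lemma tree_dist_anc:
  assumes "rooted_tree V r par" "u \<in> V" "v \<in> V" "depth r par u \<le> depth r par v"
    "tree_dist r par u v \<le> depth r par v - depth r par u"
  shows "u = (par ^^ (depth r par v - depth r par u)) v"
proof -
  have "card (anc r par v) - card (anc r par u) \<le> card (anc r par v - anc r par u)"
    by (rule diff_card_le_card_Diff) simp
  moreover have "card (anc r par v) - card (anc r par u) = depth r par v - depth r par u"
    using card_anc[OF assms(1,2)] card_anc[OF assms(1,3)] by simp
  moreover have "tree_dist r par u v = card (anc r par u - anc r par v) + card (anc r par v - anc r par u)"
    unfolding tree_dist_def ..
  ultimately have "card (anc r par u - anc r par v) = 0" using assms(5) by linarith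
  hence "anc r par u - anc r par v = {}" by (simp only: card_0_eq[OF finite_Diff[OF finite_anc]])
  hence "anc r par u \<subseteq> anc r par v" by blast
  hence "u \<in> anc r par v" using anc_self[of u r par] by blast
  then obtain k where k: "k \<le> depth r par v" "u = (par ^^ k) v" unfolding anc_def by blast
  hence "depth r par u = depth r par v - k" using depth_par_pow[OF assms(1,3)] by simp
  thus ?thesis using k by simp
qed

lemma card_img_diff: "finite A \<Longrightarrow> card (g ` A - g ` B) \<le> card (A - B)"
proof -
  assume "finite A"
  have "g ` A - g ` B \<subseteq> g ` (A - B)" by blast
  hence "card (g ` A - g ` B) \<le> card (g ` (A - B))" using \<open>finite A\<close> by (intro card_mono) auto
  also have "\<dots> \<le> card (A - B)" by (rule card_image_le) (use \<open>finite A\<close> in simp)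
  finally show ?thesis .
qed

lemma anc_map:
  assumes "depth r' par' (g v) = depth r par v" "\<forall>k\<le>depth r par v. (par' ^^ k) (g v) = g ((par ^^ k) v)"
  shows "anc r' par' (g v) = g ` anc r par v"
  unfolding anc_eq assms(1) using assms(2) by force

lemma tree_dist_map:
  assumes "anc r' par' (g u) = g ` anc r par u" "anc r' par' (g v) = g ` anc r par v"
  shows "tree_dist r' par' (g u) (g v) \<le> tree_dist r par u v"
  unfolding tree_dist_def assms using card_img_diff[of "anc r par u" g] card_img_diff[of "anc r par v" g]
  by (simp add: add_mono)

lemma Sup_enat_le: "Sup {enat i | i. enat i \<le> X} = X"
proof (rule antisym)
  show "Sup {enat i | i. enat i \<le> X} \<le> X" by (rule Sup_least) auto
  show "X \<le> Sup {enat i | i. enat i \<le> X}"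
  proof (cases X)
    case (enat n) thus ?thesis by (intro Sup_upper) auto
  next
    case infinity
    show ?thesis
    proof (rule ccontr)
      assume "\<not> X \<le> Sup {enat i | i. enat i \<le> X}"
      hence "Sup {enat i | i. enat i \<le> X} \<noteq> \<infinity>" using infinity by auto
      then obtain n where n: "Sup {enat i | i. enat i \<le> X} = enat n" by (cases "Sup {enat i | i. enat i \<le> X}") auto
      have "enat (Suc n) \<le> Sup {enat i | i. enat i \<le> X}" by (rule Sup_upper) (use infinity in auto)
      thus False using n by simp
    qed
  qed
qed

lemma Sup_enat_down:
  assumes "Q 0" "\<And>k j. Q k \<Longrightarrow> j \<le> k \<Longrightarrow> Q j" "enat i \<le> Sup {enat k | k. Q k}"
  shows "Q i"
proof (rule ccontr)
  assume nq: "\<not> Q i"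
  hence lt: "\<forall>k. Q k \<longrightarrow> k < i" using assms(2) not_less by blast
  hence "i > 0" using assms(1) by blast
  have "Sup {enat k | k. Q k} \<le> enat (i - 1)" by (rule Sup_least) (use lt in auto)
  hence "enat i \<le> enat (i - 1)" using assms(3) order.trans by blast
  thus False using \<open>i > 0\<close> by simp
qed

lemma enat_le_by_finite:
  assumes "\<And>i. enat i \<le> H \<Longrightarrow> enat i \<le> X"
  shows "H \<le> X"
proof -
  have "Sup {enat i | i. enat i \<le> H} \<le> X" using assms by (auto intro: Sup_least)
  thus ?thesis by (simp only: Sup_enat_le)
qed

lemma enat_le_mono: "j \<le> i \<Longrightarrow> enat i \<le> X \<Longrightarrow> enat j \<le> X"
  by (meson enat_ord_simps(1) order_trans)

section \<open>Elliptic trees over a monoid are determined by their length function\<close>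

locale monoid_on =
  fixes S :: "'s set" and mult :: "'s \<Rightarrow> 's \<Rightarrow> 's" and one :: 's
  assumes mult_closed: "s \<in> S \<Longrightarrow> t \<in> S \<Longrightarrow> mult s t \<in> S"
    and mult_assoc: "s \<in> S \<Longrightarrow> t \<in> S \<Longrightarrow> u \<in> S \<Longrightarrow> mult (mult s t) u = mult s (mult t u)"
    and one_closed: "one \<in> S"
    and left_one: "s \<in> S \<Longrightarrow> mult one s = s"
    and right_one: "s \<in> S \<Longrightarrow> mult s one = s"

locale elliptic_S_tree = monoid_on S mult one for S mult one +
  fixes \<chi> :: "('v, 's) etree"
  assumes elliptic: "elliptic_tree S mult one \<chi>"
begin

abbreviation "V \<equiv> tverts \<chi>"
abbreviation "r0 \<equiv> troot \<chi>"
abbreviation "par \<equiv> tpar \<chi>"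
abbreviation "act \<equiv> tact \<chi>"
abbreviation "\<alpha> \<equiv> tray \<chi>"
abbreviation "dep \<equiv> depth r0 par"

definition vtx :: "nat \<Rightarrow> 's \<Rightarrow> 'v" where
  "vtx i s = act (\<alpha> i) s"

lemma rooted: "rooted_tree V r0 par"
  using elliptic unfolding elliptic_tree_def Let_def uniform_tree_def by blast

lemma max_ray: "is_max_ray V r0 par (hgt \<chi>) \<alpha>"
  using elliptic unfolding elliptic_tree_def Let_def by blast

lemma act_in: "v \<in> V \<Longrightarrow> s \<in> S \<Longrightarrow> act v s \<in> V"
  using elliptic unfolding elliptic_tree_def Let_def by blast

lemma act_depth: "v \<in> V \<Longrightarrow> s \<in> S \<Longrightarrow> dep (act v s) = dep v"
  using elliptic unfolding elliptic_tree_def Let_def by blast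

lemma act_dist: "u \<in> V \<Longrightarrow> v \<in> V \<Longrightarrow> s \<in> S \<Longrightarrow> tree_dist r0 par (act u s) (act v s) \<le> tree_dist r0 par u v"
  using elliptic unfolding elliptic_tree_def Let_def by blast

lemma act_mult: "v \<in> V \<Longrightarrow> s \<in> S \<Longrightarrow> t \<in> S \<Longrightarrow> act v (mult s t) = act (act v s) t"
  using elliptic unfolding elliptic_tree_def Let_def by blast

lemma act_one: "v \<in> V \<Longrightarrow> act v one = v"
  using elliptic unfolding elliptic_tree_def Let_def by blast

lemma V_eq: "V = {vtx i s | i s. enat i \<le> hgt \<chi> \<and> s \<in> S}"
  using elliptic unfolding elliptic_tree_def Let_def vtx_def by blast

lemma hgt_eq: "hgt \<chi> = D_chi \<chi> one one"
  unfolding D_chi_def using Sup_enat_le[of "hgt \<chi>"] by simp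

lemma ray_in: "enat i \<le> hgt \<chi> \<Longrightarrow> \<alpha> i \<in> V"
  using max_ray unfolding is_max_ray_def is_ray_def by blast

lemma ray0: "\<alpha> 0 = r0"
  using max_ray unfolding is_max_ray_def is_ray_def by blast

lemma ray_step: "enat (Suc i) \<le> hgt \<chi> \<Longrightarrow> \<alpha> (Suc i) \<noteq> r0 \<and> par (\<alpha> (Suc i)) = \<alpha> i"
  using max_ray unfolding is_max_ray_def is_ray_def by blast

lemma ray_pow: "enat i \<le> hgt \<chi> \<Longrightarrow> k \<le> i \<Longrightarrow> (par ^^ k) (\<alpha> i) = \<alpha> (i - k)"
proof (induction k)
  case (Suc k)
  have e: "i - k = Suc (i - Suc k)" using Suc.prems by simp
  have "enat (i - k) \<le> enat i" by simp
  hence "enat (i - k) \<le> hgt \<chi>" using Suc.prems(1) by (rule order_trans)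
  thus ?case using Suc ray_step[of "i - Suc k"] e by simp
qed simp

lemma ray_depth: "enat i \<le> hgt \<chi> \<Longrightarrow> dep (\<alpha> i) = i"
proof (rule depth_eq)
  assume a: "enat i \<le> hgt \<chi>"
  show "(par ^^ i) (\<alpha> i) = r0" using ray_pow[OF a, of i] ray0 by simp
  show "\<forall>m<i. (par ^^ m) (\<alpha> i) \<noteq> r0"
  proof (intro allI impI)
    fix m assume "m < i"
    hence e: "i - m = Suc (i - Suc m)" by simp
    have "enat (i - m) \<le> enat i" by simp
    hence "enat (i - m) \<le> hgt \<chi>" using a by (rule order_trans)
    thus "(par ^^ m) (\<alpha> i) \<noteq> r0" using ray_pow[OF a, of m] \<open>m < i\<close> ray_step[of "i - Suc m"] e by simp
  qed
qed

lemma vtx_in: "enat i \<le> hgt \<chi> \<Longrightarrow> s \<in> S \<Longrightarrow> vtx i s \<in> V"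
  unfolding vtx_def using act_in ray_in by blast

lemma vtx_depth: "enat i \<le> hgt \<chi> \<Longrightarrow> s \<in> S \<Longrightarrow> dep (vtx i s) = i"
  unfolding vtx_def using act_depth ray_in ray_depth by simp

text \<open>Since the action preserves depth and does not increase distances, each translate
  alpha s of the distinguished ray is again a ray: alpha_i s lies over alpha_j s.\<close>
lemma vtx_pow:
  assumes "enat i \<le> hgt \<chi>" "j \<le> i" "s \<in> S"
  shows "(par ^^ (i - j)) (vtx i s) = vtx j s"
proof -
  have "enat j \<le> enat i" using assms(2) by simp
  hence j: "enat j \<le> hgt \<chi>" using assms(1) by (rule order_trans)
  have aj: "\<alpha> j = (par ^^ (i - j)) (\<alpha> i)" using ray_pow[OF assms(1), of "i - j"] assms(2) by simp
  have "tree_dist r0 par (\<alpha> j) (\<alpha> i) = i - j"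
    unfolding aj by (rule tree_dist_par_pow[OF rooted ray_in[OF assms(1)]]) (simp add: ray_depth[OF assms(1)])
  hence "tree_dist r0 par (vtx j s) (vtx i s) \<le> i - j"
    unfolding vtx_def using act_dist[OF ray_in[OF j] ray_in[OF assms(1)] assms(3)] by simp
  hence "vtx j s = (par ^^ (dep (vtx i s) - dep (vtx j s))) (vtx i s)"
    using tree_dist_anc[OF rooted vtx_in[OF j assms(3)] vtx_in[OF assms(1,3)]]
      vtx_depth[OF j assms(3)] vtx_depth[OF assms(1,3)] assms(2) by simp
  thus ?thesis using vtx_depth[OF j assms(3)] vtx_depth[OF assms(1,3)] by simp
qed

lemma vtx0: "s \<in> S \<Longrightarrow> vtx 0 s = r0"
  using depth_props(1)[OF rooted vtx_in[of 0 s]] vtx_depth[of 0 s] by (simp add: zero_enat_def[symmetric])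

lemma vtx_eq_iff:
  assumes "enat i \<le> hgt \<chi>" "s \<in> S" "s' \<in> S"
  shows "vtx i s = vtx i s' \<longleftrightarrow> enat i \<le> D_chi \<chi> s s'"
proof -
  define Q where "Q k \<longleftrightarrow> enat k \<le> hgt \<chi> \<and> (\<forall>j\<le>k. vtx j s = vtx j s')" for k
  have Dc: "D_chi \<chi> s s' = Sup {enat k | k. Q k}"
    using assms(2,3) unfolding D_chi_def Q_def vtx_def by auto
  show ?thesis
  proof
    assume e: "vtx i s = vtx i s'"
    have "Q i" unfolding Q_def
    proof (intro conjI allI impI)
      fix j assume "j \<le> i"
      hence "vtx j s = (par ^^ (i - j)) (vtx i s)" "vtx j s' = (par ^^ (i - j)) (vtx i s')"
        using vtx_pow[OF assms(1) _ assms(2)] vtx_pow[OF assms(1) _ assms(3)] by simp_all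
      thus "vtx j s = vtx j s'" using e by simp
    qed fact
    thus "enat i \<le> D_chi \<chi> s s'" unfolding Dc by (intro Sup_upper) auto
  next
    assume le: "enat i \<le> D_chi \<chi> s s'"
    have "Q i"
    proof (rule Sup_enat_down[of Q])
      show "Q 0" unfolding Q_def using vtx0 assms by (simp add: zero_enat_def[symmetric])
      show "Q j" if h: "Q k" "j \<le> k" for k j
      proof -
        have "enat j \<le> enat k" using h(2) by simp
        hence "enat j \<le> hgt \<chi>" using h(1) unfolding Q_def using order_trans by blast
        thus ?thesis using h unfolding Q_def by auto
      qed
      show "enat i \<le> Sup {enat k | k. Q k}" using le unfolding Dc .
    qed
    thus "vtx i s = vtx i s'" unfolding Q_def by simp
  qed
qed

lemma V_cases: "v \<in> V \<Longrightarrow> \<exists>i s. enat i \<le> hgt \<chi> \<and> s \<in> S \<and> v = vtx i s"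
  using V_eq by auto

lemma act_vtx: "enat i \<le> hgt \<chi> \<Longrightarrow> s \<in> S \<Longrightarrow> t \<in> S \<Longrightarrow> act (vtx i s) t = vtx i (mult s t)"
  unfolding vtx_def using act_mult ray_in by simp

lemma ray_vtx: "enat i \<le> hgt \<chi> \<Longrightarrow> \<alpha> i = vtx i one"
  unfolding vtx_def using act_one ray_in one_closed by simp

end

locale tree_pair = t1: elliptic_S_tree S mult one \<chi>1 + t2: elliptic_S_tree S mult one \<chi>2
  for S :: "'s set" and mult one and \<chi>1 :: "('v, 's) etree" and \<chi>2 :: "('w, 's) etree" +
  assumes same_length: "\<forall>\<sigma>\<in>S. \<forall>\<tau>\<in>S. D_chi \<chi>1 \<sigma> \<tau> = D_chi \<chi>2 \<sigma> \<tau>"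
begin

lemma same_hgt: "hgt \<chi>1 = hgt \<chi>2"
  using t1.hgt_eq t2.hgt_eq same_length t1.one_closed by simp

text \<open>Whether alpha_i s and alpha_i s' coincide is decided by the length function,
  so it is the same question in both trees.\<close>
lemma vtx_eq_transfer:
  assumes "enat i \<le> hgt \<chi>1" "s \<in> S" "s' \<in> S"
  shows "t1.vtx i s = t1.vtx i s' \<longleftrightarrow> t2.vtx i s = t2.vtx i s'"
  using t1.vtx_eq_iff t2.vtx_eq_iff same_length same_hgt assms by simp

text \<open>The isomorphism sends alpha_i s in the first tree to alpha_i s in the second.\<close>
definition iso :: "'v \<Rightarrow> 'w" where
  "iso v = t2.vtx (t1.dep v) (SOME s. s \<in> S \<and> v = t1.vtx (t1.dep v) s)"

lemma iso_vtx:
  assumes "enat i \<le> hgt \<chi>1" "s \<in> S"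
  shows "iso (t1.vtx i s) = t2.vtx i s"
proof -
  define s' where "s' = (SOME s'. s' \<in> S \<and> t1.vtx i s = t1.vtx i s')"
  have "s' \<in> S \<and> t1.vtx i s = t1.vtx i s'"
    unfolding s'_def by (rule someI[of _ s]) (use assms in simp)
  hence "s' \<in> S" "t2.vtx i s = t2.vtx i s'" using vtx_eq_transfer assms by auto
  moreover have "iso (t1.vtx i s) = t2.vtx i s'"
    unfolding iso_def s'_def using t1.vtx_depth assms by simp
  ultimately show ?thesis by simp
qed

lemma iso_bij: "bij_betw iso t1.V t2.V"
proof (rule bij_betw_imageI)
  show "inj_on iso t1.V"
  proof (rule inj_onI)
    fix u v assume uv: "u \<in> t1.V" "v \<in> t1.V" "iso u = iso v"
    obtain i s where u: "enat i \<le> hgt \<chi>1" "s \<in> S" "u = t1.vtx i s" using t1.V_cases uv(1) by blast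
    obtain j t where v: "enat j \<le> hgt \<chi>1" "t \<in> S" "v = t1.vtx j t" using t1.V_cases uv(2) by blast
    have e: "t2.vtx i s = t2.vtx j t" using uv(3) u v iso_vtx by simp
    hence "i = j" using t2.vtx_depth u v same_hgt by metis
    thus "u = v" using e vtx_eq_transfer u v by simp
  qed
  show "iso ` t1.V = t2.V"
  proof
    show "iso ` t1.V \<subseteq> t2.V"
      using t1.V_cases iso_vtx t2.vtx_in same_hgt by fastforce
    show "t2.V \<subseteq> iso ` t1.V"
    proof
      fix w assume "w \<in> t2.V"
      then obtain i s where w: "enat i \<le> hgt \<chi>1" "s \<in> S" "w = t2.vtx i s"
        using t2.V_cases same_hgt by metis
      thus "w \<in> iso ` t1.V" using iso_vtx t1.vtx_in by (metis image_eqI)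
    qed
  qed
qed

lemma iso_depth:
  assumes "v \<in> t1.V"
  shows "t2.dep (iso v) = t1.dep v"
proof -
  obtain i s where "enat i \<le> hgt \<chi>1" "s \<in> S" "v = t1.vtx i s" using t1.V_cases assms by blast
  thus ?thesis using iso_vtx t1.vtx_depth t2.vtx_depth same_hgt by simp
qed

lemma iso_anc:
  assumes "v \<in> t1.V"
  shows "anc t2.r0 t2.par (iso v) = iso ` anc t1.r0 t1.par v"
proof (rule anc_map)
  show "t2.dep (iso v) = t1.dep v" using iso_depth assms .
  obtain i s where v: "enat i \<le> hgt \<chi>1" "s \<in> S" "v = t1.vtx i s" using t1.V_cases assms by blast
  show "\<forall>k\<le>t1.dep v. (t2.par ^^ k) (iso v) = iso ((t1.par ^^ k) v)"
  proof (intro allI impI)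
    fix k assume "k \<le> t1.dep v"
    hence k: "k \<le> i" using v t1.vtx_depth by simp
    have ik: "enat (i - k) \<le> hgt \<chi>1" using enat_le_mono[of "i - k" i] v(1) by simp
    have "(t1.par ^^ k) v = t1.vtx (i - k) s" using t1.vtx_pow[of i "i - k" s] v k by simp
    moreover have "(t2.par ^^ k) (iso v) = t2.vtx (i - k) s"
      using t2.vtx_pow[of i "i - k" s] v k same_hgt iso_vtx by simp
    ultimately show "(t2.par ^^ k) (iso v) = iso ((t1.par ^^ k) v)" using iso_vtx[OF ik v(2)] by simp
  qed
qed

lemma iso_act:
  assumes "v \<in> t1.V" "s \<in> S"
  shows "iso (t1.act v s) = t2.act (iso v) s"
proof -
  obtain i t where v: "enat i \<le> hgt \<chi>1" "t \<in> S" "v = t1.vtx i t" using t1.V_cases assms by blast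
  have "mult t s \<in> S" using t1.mult_closed v(2) assms(2) by blast
  thus ?thesis using t1.act_vtx t2.act_vtx v iso_vtx same_hgt assms(2) by simp
qed

theorem etree_iso: "etree_iso S \<chi>1 \<chi>2"
  unfolding etree_iso_def
proof (intro exI[of _ iso] conjI ballI allI impI)
  show "iso t1.r0 = t2.r0"
    using iso_vtx[of 0 one] t1.vtx0 t2.vtx0 t1.one_closed by (simp add: zero_enat_def[symmetric])
  show "tree_dist t2.r0 t2.par (iso u) (iso v) \<le> tree_dist t1.r0 t1.par u v"
    if "u \<in> t1.V" "v \<in> t1.V" for u v
    by (rule tree_dist_map) (use iso_anc that in auto)
  show "iso (t1.\<alpha> i) = t2.\<alpha> i" if "enat i \<le> hgt \<chi>1" for i
    using that t1.ray_vtx t2.ray_vtx iso_vtx same_hgt t1.one_closed by simp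
qed (use iso_bij iso_depth iso_act same_hgt in auto)

end

text \<open>Uniqueness: elliptic S-trees with equal length functions are isomorphic.\<close>
theorem (in monoid_on) elliptic_tree_iso:
  fixes \<chi>1 :: "('v, 's) etree" and \<chi>2 :: "('w, 's) etree"
  assumes "elliptic_tree S mult one \<chi>1" "elliptic_tree S mult one \<chi>2"
    and "\<forall>\<sigma>\<in>S. \<forall>\<tau>\<in>S. D_chi \<chi>1 \<sigma> \<tau> = D_chi \<chi>2 \<sigma> \<tau>"
  shows "etree_iso S \<chi>1 \<chi>2"
proof -
  interpret tree_pair S mult one \<chi>1 \<chi>2
    using assms by unfold_locales auto
  show ?thesis by (rule etree_iso)
qed

section \<open>The tree of balls of a strict length function\<close>

text \<open>A monoid with a strict length function D. By (L2) D is constant on the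
  diagonal; this value is the height of the tree to be built.\<close>
locale strict_length_monoid = monoid_on S mult one for S :: "'s set" and mult one +
  fixes D :: "'s \<Rightarrow> 's \<Rightarrow> enat"
  assumes strict_length: "strict_length_function S mult D"
begin

abbreviation height :: enat where
  "height \<equiv> D one one"

lemma D_sym: "s \<in> S \<Longrightarrow> t \<in> S \<Longrightarrow> D s t = D t s"
  using strict_length unfolding strict_length_function_def length_function_def by blast

lemma D_ultrametric: "s \<in> S \<Longrightarrow> t \<in> S \<Longrightarrow> u \<in> S \<Longrightarrow> min (D s t) (D t u) \<le> D s u"
  using strict_length unfolding strict_length_function_def length_function_def by blast

lemma D_right_invariant: "s \<in> S \<Longrightarrow> t \<in> S \<Longrightarrow> u \<in> S \<Longrightarrow> D t u \<le> D (mult t s) (mult u s)"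
  using strict_length unfolding strict_length_function_def length_function_def by blast

lemma D_le_height: "s \<in> S \<Longrightarrow> t \<in> S \<Longrightarrow> D s t \<le> height"
  using strict_length one_closed unfolding strict_length_function_def length_function_def by blast

lemma D_diag: "s \<in> S \<Longrightarrow> D s s = height"
  using D_le_height[of s s] strict_length one_closed
  unfolding strict_length_function_def length_function_def by (meson antisym)

lemma D_eq_height: "s \<in> S \<Longrightarrow> t \<in> S \<Longrightarrow> D s t = height \<longleftrightarrow> s = t"
  using strict_length one_closed D_diag unfolding strict_length_function_def by blast

text \<open>The vertices at depth i are the closed balls of radius i (pairs of the depth and
  the ball, to keep distinct levels apart); parent and action go through an arbitrary
  centre rep c of the ball c.\<close>
definition ball :: "nat \<Rightarrow> 's \<Rightarrow> 's set" where
  "ball i \<sigma> = {\<tau> \<in> S. enat i \<le> D \<sigma> \<tau>}"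

definition rep :: "'s set \<Rightarrow> 's" where
  "rep c = (SOME \<sigma>. \<sigma> \<in> c)"

definition ball_verts :: "(nat \<times> 's set) set" where
  "ball_verts = {(i, ball i \<sigma>) | i \<sigma>. enat i \<le> height \<and> \<sigma> \<in> S}"

definition ball_par :: "nat \<times> 's set \<Rightarrow> nat \<times> 's set" where
  "ball_par v = (fst v - 1, ball (fst v - 1) (rep (snd v)))"

definition ball_act :: "nat \<times> 's set \<Rightarrow> 's \<Rightarrow> nat \<times> 's set" where
  "ball_act v s = (fst v, ball (fst v) (mult (rep (snd v)) s))"

definition ball_tree :: "(nat \<times> 's set, 's) etree" where
  "ball_tree = \<lparr>troot = (0, S), tverts = ball_verts, tpar = ball_par, hgt = height,
                tray = (\<lambda>i. (i, ball i one)), tact = ball_act\<rparr>"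

lemma ball0: "ball 0 \<sigma> = S" unfolding ball_def by (auto simp: zero_enat_def[symmetric])

lemma ball_self: "\<sigma> \<in> S \<Longrightarrow> enat i \<le> height \<Longrightarrow> \<sigma> \<in> ball i \<sigma>"
  unfolding ball_def by (simp add: D_diag)

lemma ball_eq:
  assumes "\<sigma> \<in> S" "\<tau> \<in> S" "enat i \<le> D \<sigma> \<tau>"
  shows "ball i \<sigma> = ball i \<tau>"
proof -
  have "\<rho> \<in> ball i \<tau>" if "\<rho> \<in> ball i \<sigma>" "\<sigma> \<in> S" "\<tau> \<in> S" "enat i \<le> D \<sigma> \<tau>" for \<rho> \<sigma> \<tau>
  proof -
    have \<rho>: "\<rho> \<in> S" "enat i \<le> D \<sigma> \<rho>" using that unfolding ball_def by auto
    have "min (D \<tau> \<sigma>) (D \<sigma> \<rho>) \<le> D \<tau> \<rho>" using D_ultrametric that \<rho> by blast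
    moreover have "D \<tau> \<sigma> = D \<sigma> \<tau>" using D_sym that by simp
    ultimately have "enat i \<le> D \<tau> \<rho>" using \<rho> that by (simp add: min_def split: if_splits)
    thus ?thesis using \<rho> unfolding ball_def by simp
  qed
  moreover have "enat i \<le> D \<tau> \<sigma>" using assms D_sym by simp
  ultimately show ?thesis using assms by blast
qed

lemma ball_eq_iff:
  assumes "\<sigma> \<in> S" "\<tau> \<in> S" "enat i \<le> height"
  shows "ball i \<sigma> = ball i \<tau> \<longleftrightarrow> enat i \<le> D \<sigma> \<tau>"
proof
  assume "ball i \<sigma> = ball i \<tau>"
  hence "\<tau> \<in> ball i \<sigma>" using ball_self assms by simp
  thus "enat i \<le> D \<sigma> \<tau>" unfolding ball_def by simp
qed (use ball_eq assms in blast)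

lemma rep_ball:
  assumes "\<sigma> \<in> S" "enat i \<le> height"
  shows "rep (ball i \<sigma>) \<in> S" "enat i \<le> D \<sigma> (rep (ball i \<sigma>))"
proof -
  have "rep (ball i \<sigma>) \<in> ball i \<sigma>" unfolding rep_def by (rule someI[of _ \<sigma>]) (rule ball_self[OF assms])
  thus "rep (ball i \<sigma>) \<in> S" "enat i \<le> D \<sigma> (rep (ball i \<sigma>))" unfolding ball_def by auto
qed

lemma ball_rep:
  assumes "\<sigma> \<in> S" "enat i \<le> height" "j \<le> i"
  shows "ball j (rep (ball i \<sigma>)) = ball j \<sigma>"
proof -
  have "enat i \<le> D (rep (ball i \<sigma>)) \<sigma>" using rep_ball[OF assms(1,2)] D_sym assms(1) by simp
  hence "enat j \<le> D (rep (ball i \<sigma>)) \<sigma>" using assms(3) enat_le_mono by blast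
  thus ?thesis using ball_eq[OF rep_ball(1)[OF assms(1,2)] assms(1)] by blast
qed

lemma ball_par_pow:
  assumes "\<sigma> \<in> S" "enat i \<le> height"
  shows "(ball_par ^^ k) (i, ball i \<sigma>) = (i - k, ball (i - k) \<sigma>)"
proof (induction k)
  case (Suc k)
  have "enat (i - k) \<le> height" using assms(2) enat_le_mono[of "i - k" i] by simp
  hence "ball_par (i - k, ball (i - k) \<sigma>) = (i - Suc k, ball (i - Suc k) \<sigma>)"
    unfolding ball_par_def using ball_rep[OF assms(1), of "i - k" "i - k - 1"] by simp
  thus ?case using Suc by simp
qed simp

lemma ball_verts_cases: "v \<in> ball_verts \<Longrightarrow> \<exists>i \<sigma>. v = (i, ball i \<sigma>) \<and> enat i \<le> height \<and> \<sigma> \<in> S"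
  unfolding ball_verts_def by blast

lemma ball_verts_in: "enat i \<le> height \<Longrightarrow> \<sigma> \<in> S \<Longrightarrow> (i, ball i \<sigma>) \<in> ball_verts"
  unfolding ball_verts_def by blast

lemma ball_depth:
  assumes "\<sigma> \<in> S" "enat i \<le> height"
  shows "depth (0, S) ball_par (i, ball i \<sigma>) = i"
proof (rule depth_eq)
  show "(ball_par ^^ i) (i, ball i \<sigma>) = (0, S)" using ball_par_pow[OF assms] by (simp add: ball0)
  show "\<forall>m<i. (ball_par ^^ m) (i, ball i \<sigma>) \<noteq> (0, S)" using ball_par_pow[OF assms] by simp
qed

lemma ball_rooted: "rooted_tree ball_verts (0, S) ball_par"
  unfolding rooted_tree_def
proof (intro conjI ballI impI)
  show "(0, S) \<in> ball_verts" using ball_verts_in[of 0 one] one_closed by (simp add: ball0 zero_enat_def[symmetric])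
  fix v assume v: "v \<in> ball_verts"
  then obtain i \<sigma> where i: "v = (i, ball i \<sigma>)" "enat i \<le> height" "\<sigma> \<in> S" using ball_verts_cases by blast
  have "ball_par v = (i - 1, ball (i - 1) \<sigma>)" using ball_par_pow[OF i(3,2), of 1] i by simp
  moreover have "enat (i - 1) \<le> height" using i enat_le_mono[of "i - 1" i] by simp
  ultimately show "ball_par v \<in> ball_verts" using ball_verts_in i by simp
  show "\<exists>k. (ball_par ^^ k) v = (0, S)" using ball_par_pow[OF i(3,2), of i] i by (auto simp: ball0)
qed

lemma ball_verts_level: "v \<in> ball_verts \<Longrightarrow> enat (fst v) \<le> height" using ball_verts_cases by fastforce

text \<open>A ray from the root visits level j at step j, so a maximal ray has length equal
  to the height: a finite ray ending below the height can still be extended.\<close>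
lemma ball_ray_levels:
  assumes "is_ray ball_verts (0, S) ball_par l \<beta>"
  shows "enat j \<le> l \<Longrightarrow> fst (\<beta> j) = j \<and> \<beta> j \<in> ball_verts"
proof (induction j)
  case 0 thus ?case using assms ball_rooted unfolding is_ray_def rooted_tree_def by auto
next
  case (Suc j)
  have "enat j \<le> l" using Suc.prems enat_le_mono[of j "Suc j"] by simp
  hence ij: "fst (\<beta> j) = j" using Suc.IH by simp
  have b: "\<beta> (Suc j) \<in> ball_verts" "\<beta> (Suc j) \<noteq> (0, S)" "ball_par (\<beta> (Suc j)) = \<beta> j"
    using assms Suc.prems unfolding is_ray_def by auto
  then obtain i \<tau> where i: "\<beta> (Suc j) = (i, ball i \<tau>)" "enat i \<le> height" "\<tau> \<in> S" using ball_verts_cases by blast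
  have "i \<noteq> 0" using b(2) i(1) ball0 by auto
  moreover have "fst (ball_par (\<beta> (Suc j))) = i - 1" using i(1) unfolding ball_par_def by simp
  hence "i - 1 = j" using b(3) ij by simp
  ultimately show ?case using i b by simp
qed

lemma ball_max_ray_length:
  assumes "is_max_ray ball_verts (0, S) ball_par l \<beta>"
  shows "l = height"
proof (cases l)
  case (enat n)
  have r: "is_ray ball_verts (0, S) ball_par l \<beta>" using assms unfolding is_max_ray_def by simp
  have bn: "fst (\<beta> n) = n" "\<beta> n \<in> ball_verts" using ball_ray_levels[OF r, of n] enat by auto
  then obtain \<sigma> where \<sigma>: "\<beta> n = (n, ball n \<sigma>)" "enat n \<le> height" "\<sigma> \<in> S" using ball_verts_cases by fastforce
  show ?thesis
  proof (rule ccontr)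
    assume "l \<noteq> height"
    hence "enat n \<noteq> height" using enat by simp
    hence "enat n < height" using \<sigma>(2) order_le_neq_trans by blast
    hence s: "enat (Suc n) \<le> height" using Suc_ile_eq by blast
    have "ball_par (Suc n, ball (Suc n) \<sigma>) = (n, ball n \<sigma>)" using ball_par_pow[OF \<sigma>(3) s, of 1] by simp
    moreover have "(Suc n, ball (Suc n) \<sigma>) \<in> ball_verts" using ball_verts_in s \<sigma> by blast
    ultimately show False using assms enat \<sigma>(1) unfolding is_max_ray_def by force
  qed
next
  case infinity
  have r: "is_ray ball_verts (0, S) ball_par l \<beta>" using assms unfolding is_max_ray_def by simp
  have "enat j \<le> height" for j using ball_ray_levels[OF r, of j] infinity ball_verts_level by fastforce
  hence "\<infinity> \<le> height" by (rule enat_le_by_finite)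
  thus ?thesis using infinity by simp
qed

text \<open>Right invariance (L3) makes the action well defined: it does not depend on the
  chosen centre of the ball.\<close>
lemma ball_act_ball:
  assumes "\<sigma> \<in> S" "enat i \<le> height" "s \<in> S"
  shows "ball_act (i, ball i \<sigma>) s = (i, ball i (mult \<sigma> s))"
proof -
  have "enat i \<le> D (mult (rep (ball i \<sigma>)) s) (mult \<sigma> s)"
  proof -
    have "enat i \<le> D (rep (ball i \<sigma>)) \<sigma>" using rep_ball[OF assms(1,2)] D_sym assms(1) by simp
    also have "\<dots> \<le> D (mult (rep (ball i \<sigma>)) s) (mult \<sigma> s)"
      using D_right_invariant[OF assms(3) rep_ball(1)[OF assms(1,2)] assms(1)] .
    finally show ?thesis .
  qed
  hence "ball i (mult (rep (ball i \<sigma>)) s) = ball i (mult \<sigma> s)"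
    by (rule ball_eq[rotated 2]) (use mult_closed rep_ball[OF assms(1,2)] assms in blast)+
  thus ?thesis unfolding ball_act_def by simp
qed

lemma ball_act_ray: "enat i \<le> height \<Longrightarrow> s \<in> S \<Longrightarrow> ball_act (i, ball i one) s = (i, ball i s)"
  using ball_act_ball[OF one_closed] left_one by simp

lemma ball_uniform: "uniform_tree ball_verts (0, S) ball_par"
  unfolding uniform_tree_def using ball_rooted ball_max_ray_length by blast

lemma ball_max_ray: "is_max_ray ball_verts (0, S) ball_par height (\<lambda>i. (i, ball i one))"
  unfolding is_max_ray_def is_ray_def
proof (intro conjI allI impI)
  show "(0, ball 0 one) = (0::nat, S)" by (simp add: ball0)
  fix i
  show "enat i \<le> height \<Longrightarrow> (i, ball i one) \<in> ball_verts" using ball_verts_in one_closed by simp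
  show "enat (Suc i) \<le> height \<Longrightarrow> (Suc i, ball (Suc i) one) \<noteq> (0, S)" by simp
  show "enat (Suc i) \<le> height \<Longrightarrow> ball_par (Suc i, ball (Suc i) one) = (i, ball i one)"
    using ball_par_pow[OF one_closed, of "Suc i" 1] by simp
next
  fix n assume n: "height = enat n"
  show "\<not> (\<exists>w\<in>ball_verts. w \<noteq> (0, S) \<and> ball_par w = (n, ball n one))"
  proof
    assume "\<exists>w\<in>ball_verts. w \<noteq> (0, S) \<and> ball_par w = (n, ball n one)"
    then obtain w where w: "w \<in> ball_verts" "w \<noteq> (0, S)" "ball_par w = (n, ball n one)" by blast
    then obtain i \<tau> where i: "w = (i, ball i \<tau>)" "enat i \<le> height" "\<tau> \<in> S"
      using ball_verts_cases by blast
    have "i \<noteq> 0" using w(2) i(1) ball0 by auto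
    moreover have "i - 1 = n" using w(3) i(1) unfolding ball_par_def by simp
    ultimately show False using i(2) n by simp
  qed
qed

lemma ball_act_anc:
  assumes w: "w \<in> ball_verts" and s: "s \<in> S"
  shows "anc (0, S) ball_par (ball_act w s) = (\<lambda>w. ball_act w s) ` anc (0, S) ball_par w"
proof (rule anc_map)
  obtain j \<tau> where j: "w = (j, ball j \<tau>)" "enat j \<le> height" "\<tau> \<in> S" using ball_verts_cases w by blast
  have aw: "ball_act w s = (j, ball j (mult \<tau> s))" using ball_act_ball j s by simp
  have mt: "mult \<tau> s \<in> S" using mult_closed j s by blast
  show "depth (0, S) ball_par (ball_act w s) = depth (0, S) ball_par w" using aw ball_depth j mt by simp
  show "\<forall>k\<le>depth (0, S) ball_par w. (ball_par ^^ k) (ball_act w s) = ball_act ((ball_par ^^ k) w) s"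
  proof (intro allI impI)
    fix k
    have jk: "enat (j - k) \<le> height" using j enat_le_mono[of "j - k" j] by simp
    show "(ball_par ^^ k) (ball_act w s) = ball_act ((ball_par ^^ k) w) s"
      using aw ball_par_pow[OF mt j(2)] ball_par_pow[OF j(3,2)] j ball_act_ball[OF j(3) jk s] by simp
  qed
qed

theorem ball_tree_elliptic: "elliptic_tree S mult one ball_tree"
  unfolding elliptic_tree_def Let_def ball_tree_def etree.simps
proof (intro conjI ballI ball_uniform ball_max_ray)
  fix v s assume v: "v \<in> ball_verts" and s: "s \<in> S"
  obtain i \<sigma> where i: "v = (i, ball i \<sigma>)" "enat i \<le> height" "\<sigma> \<in> S" using ball_verts_cases v by blast
  have av: "ball_act v s = (i, ball i (mult \<sigma> s))" using ball_act_ball i s by simp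
  have ms: "mult \<sigma> s \<in> S" using mult_closed i s by blast
  show "ball_act v s \<in> ball_verts" using av ball_verts_in i ms by simp
  show "depth (0, S) ball_par (ball_act v s) = depth (0, S) ball_par v"
    using av ball_depth i ms by simp
  show "tree_dist (0, S) ball_par (ball_act u s) (ball_act v s) \<le> tree_dist (0, S) ball_par u v"
    if "u \<in> ball_verts" for u
    by (rule tree_dist_map) (use ball_act_anc that v s in auto)
  show "ball_act v (mult s t) = ball_act (ball_act v s) t" if t: "t \<in> S" for t
    using av ball_act_ball[OF ms i(2) t] ball_act_ball[OF i(3,2) mult_closed[OF s t]] i
      mult_assoc[OF i(3) s t] by simp
next
  fix v assume v: "v \<in> ball_verts"
  obtain i \<sigma> where i: "v = (i, ball i \<sigma>)" "enat i \<le> height" "\<sigma> \<in> S" using ball_verts_cases v by blast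
  show "ball_act v one = v" using ball_act_ball[OF i(3,2) one_closed] right_one[OF i(3)] i by simp
next
  show "ball_verts = {ball_act (i, ball i one) s |i s. enat i \<le> height \<and> s \<in> S}"
    unfolding ball_verts_def using ball_act_ray by force
qed

text \<open>Two elements act identically on the ray iff they lie in a common ball of every
  radius up to the height, i.e. iff they are equal.\<close>
theorem ball_tree_strongly_faithful: "strongly_faithful S ball_tree"
  unfolding strongly_faithful_def ball_tree_def etree.simps
proof (intro ballI impI)
  fix s s' assume s: "s \<in> S" "s' \<in> S"
    and h: "\<forall>i. enat i \<le> height \<longrightarrow> ball_act (i, ball i one) s = ball_act (i, ball i one) s'"
  have "height \<le> D s s'"
  proof (rule enat_le_by_finite)
    fix i assume i: "enat i \<le> height"
    hence "ball i s = ball i s'" using h ball_act_ray s by simp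
    thus "enat i \<le> D s s'" using ball_eq_iff s i by blast
  qed
  thus "s = s'" using D_le_height D_eq_height s by (metis antisym)
qed

theorem ball_tree_length: "\<forall>\<sigma>\<in>S. \<forall>\<tau>\<in>S. D_chi ball_tree \<sigma> \<tau> = D \<sigma> \<tau>"
proof (intro ballI)
  fix \<sigma> \<tau> assume st: "\<sigma> \<in> S" "\<tau> \<in> S"
  have "(enat i \<le> height \<and> (\<forall>j\<le>i. ball_act (j, ball j one) \<sigma> = ball_act (j, ball j one) \<tau>))
      \<longleftrightarrow> enat i \<le> D \<sigma> \<tau>" for i
  proof
    assume a: "enat i \<le> height \<and> (\<forall>j\<le>i. ball_act (j, ball j one) \<sigma> = ball_act (j, ball j one) \<tau>)"
    hence "ball i \<sigma> = ball i \<tau>" using ball_act_ray st by auto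
    thus "enat i \<le> D \<sigma> \<tau>" using ball_eq_iff st a by blast
  next
    assume a: "enat i \<le> D \<sigma> \<tau>"
    hence iH: "enat i \<le> height" using D_le_height[OF st] order_trans by blast
    have "ball_act (j, ball j one) \<sigma> = ball_act (j, ball j one) \<tau>" if "j \<le> i" for j
    proof -
      have "enat j \<le> D \<sigma> \<tau>" "enat j \<le> height" using a iH that enat_le_mono by blast+
      thus ?thesis using ball_act_ray st ball_eq_iff[OF st] by simp
    qed
    thus "enat i \<le> height \<and> (\<forall>j\<le>i. ball_act (j, ball j one) \<sigma> = ball_act (j, ball j one) \<tau>)"
      using iH by blast
  qed
  thus "D_chi ball_tree \<sigma> \<tau> = D \<sigma> \<tau>"
    unfolding D_chi_def ball_tree_def etree.simps using Sup_enat_le by simp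
qed

end

lemma rh_monoid: "monoid_on rh_set rh_mult rh_one"
  by unfold_locales (auto simp: rh_mult_closed rh_assoc rh_left_one rh_right_one)

theorem theorem6p1:
  fixes f :: "'a::semigroup_mult option \<Rightarrow> nat"
  assumes "f None = 0"
    and "\<And>m m' m''. f (omult m' (omult m m'')) \<ge> f m"
  shows "strict_length_function rh_set rh_mult (D_rh f)
     \<and> (\<exists>\<chi> :: (nat \<times> 'a option list set, 'a option list) etree.
          elliptic_tree rh_set rh_mult rh_one \<chi> \<and> strongly_faithful rh_set \<chi> \<and>
          (\<forall>\<sigma>\<in>rh_set. \<forall>\<tau>\<in>rh_set. D_chi \<chi> \<sigma> \<tau> = D_rh f \<sigma> \<tau>))
     \<and> (\<forall>(\<chi>1 :: ('v, 'a option list) etree) (\<chi>2 :: ('w, 'a option list) etree).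
          elliptic_tree rh_set rh_mult rh_one \<chi>1 \<and> strongly_faithful rh_set \<chi>1 \<and>
          (\<forall>\<sigma>\<in>rh_set. \<forall>\<tau>\<in>rh_set. D_chi \<chi>1 \<sigma> \<tau> = D_rh f \<sigma> \<tau>) \<and>
          elliptic_tree rh_set rh_mult rh_one \<chi>2 \<and> strongly_faithful rh_set \<chi>2 \<and>
          (\<forall>\<sigma>\<in>rh_set. \<forall>\<tau>\<in>rh_set. D_chi \<chi>2 \<sigma> \<tau> = D_rh f \<sigma> \<tau>)
          \<longrightarrow> etree_iso rh_set \<chi>1 \<chi>2)"
proof -
  interpret rh_weight f using assms by unfold_locales
  have strict: "strict_length_function rh_set rh_mult (D_rh f)"
    by (rule D_rh_strict_length_function)
  interpret rh: strict_length_monoid rh_set rh_mult rh_one "D_rh f"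
    using rh_monoid strict by (simp add: strict_length_monoid_def strict_length_monoid_axioms_def)
  have existence: "elliptic_tree rh_set rh_mult rh_one rh.ball_tree \<and> strongly_faithful rh_set rh.ball_tree
      \<and> (\<forall>\<sigma>\<in>rh_set. \<forall>\<tau>\<in>rh_set. D_chi rh.ball_tree \<sigma> \<tau> = D_rh f \<sigma> \<tau>)"
    using rh.ball_tree_elliptic rh.ball_tree_strongly_faithful rh.ball_tree_length by blast
  have uniqueness: "etree_iso rh_set \<chi>1 \<chi>2"
    if "elliptic_tree rh_set rh_mult rh_one \<chi>1" "elliptic_tree rh_set rh_mult rh_one \<chi>2"
      "\<forall>\<sigma>\<in>rh_set. \<forall>\<tau>\<in>rh_set. D_chi \<chi>1 \<sigma> \<tau> = D_rh f \<sigma> \<tau>"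
      "\<forall>\<sigma>\<in>rh_set. \<forall>\<tau>\<in>rh_set. D_chi \<chi>2 \<sigma> \<tau> = D_rh f \<sigma> \<tau>"
    for \<chi>1 :: "('v, 'a option list) etree" and \<chi>2 :: "('w, 'a option list) etree"
    using rh.elliptic_tree_iso[OF that(1,2)] that(3,4) by simp
  show ?thesis
    using strict existence uniqueness by blast
qed

end
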